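(* Let $G$ be a pro-$p$ group. Suppose that for every open subgroup $U$ of $G$ there exists a Frattini-cover $\phi: U\to K$ onto a pro-$p$ group $K$ such that $(K,M,\Phi(M))$ is a hierarchical triple for every maximal subgroup $M$ of $K$. Then $G$ is strongly Frattini-resistant.
   Context: $p$ is a prime; subgroups are closed; $\Phi(H)$ is the Frattini subgroup. A Frattini-cover is an epimorphism $\phi: G\to H$ of pro-$p$ groups with $\ker\phi\le\Phi(G)$. A triple $(G,K,H)$ with $H\le K\le G$ is hierarchical if $x\in G$, $x^p\in H$ imply $x\in K$. $G$ is strongly Frattini-resistant if $(G,H,\Phi(H))$ is hierarchical for every subgroup $H$ of $G$. *)

theory Defs
  imports "HOL-Algebra.Algebra" "HOL-Analysis.Analysis"
begin

definition topological_group :: "('a, 'm) monoid_scheme \<Rightarrow> 'a topology \<Rightarrow> bool" where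
  "topological_group G T \<longleftrightarrow> group G \<and> topspace T = carrier G \<and>
     continuous_map (prod_topology T T) T (\<lambda>(x, y). x \<otimes>\<^bsub>G\<^esub> y) \<and>
     continuous_map T T (\<lambda>x. inv\<^bsub>G\<^esub> x)"

definition profinite_group :: "('a, 'm) monoid_scheme \<Rightarrow> 'a topology \<Rightarrow> bool" where
  "profinite_group G T \<longleftrightarrow> topological_group G T \<and> compact_space T \<and> Hausdorff_space T \<and>
     (\<forall>x\<in>topspace T. connected_component_of_set T x = {x})"

definition pro_p_group :: "('a, 'm) monoid_scheme \<Rightarrow> 'a topology \<Rightarrow> nat \<Rightarrow> bool" where
  "pro_p_group G T p \<longleftrightarrow> profinite_group G T \<and>
     (\<forall>N. N \<lhd> G \<and> openin T N \<longrightarrow> (\<exists>k. card (rcosets\<^bsub>G\<^esub> N) = p ^ k))"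

text \<open>(Closed) subgroups: as in the paper, "subgroup" means closed subgroup.\<close>
definition closed_subgroup :: "('a, 'm) monoid_scheme \<Rightarrow> 'a topology \<Rightarrow> 'a set \<Rightarrow> bool" where
  "closed_subgroup G T H \<longleftrightarrow> subgroup H G \<and> closedin T H"

definition open_subgroup :: "('a, 'm) monoid_scheme \<Rightarrow> 'a topology \<Rightarrow> 'a set \<Rightarrow> bool" where
  "open_subgroup G T U \<longleftrightarrow> subgroup U G \<and> openin T U"

definition maximal_subgroup_of :: "('a, 'm) monoid_scheme \<Rightarrow> 'a topology \<Rightarrow> 'a set \<Rightarrow> 'a set \<Rightarrow> bool" where
  "maximal_subgroup_of G T H M \<longleftrightarrow> closed_subgroup G T M \<and> M \<subset> H \<and>
     (\<forall>L. closed_subgroup G T L \<and> M \<subseteq> L \<and> L \<subseteq> H \<longrightarrow> L = M \<or> L = H)"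

text \<open>Frattini subgroup of the closed subgroup H: intersection of its maximal subgroups
  (H itself if there are none).\<close>
definition frattini :: "('a, 'm) monoid_scheme \<Rightarrow> 'a topology \<Rightarrow> 'a set \<Rightarrow> 'a set" where
  "frattini G T H = H \<inter> \<Inter> {M. maximal_subgroup_of G T H M}"

definition hierarchical :: "('a, 'm) monoid_scheme \<Rightarrow> nat \<Rightarrow> 'a set \<Rightarrow> 'a set \<Rightarrow> bool" where
  "hierarchical G p K H \<longleftrightarrow> H \<subseteq> K \<and> K \<subseteq> carrier G \<and>
     (\<forall>x\<in>carrier G. x [^]\<^bsub>G\<^esub> p \<in> H \<longrightarrow> x \<in> K)"

definition strongly_frattini_resistant :: "('a, 'm) monoid_scheme \<Rightarrow> 'a topology \<Rightarrow> nat \<Rightarrow> bool" where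
  "strongly_frattini_resistant G T p \<longleftrightarrow>
     (\<forall>H. closed_subgroup G T H \<longrightarrow> hierarchical G p H (frattini G T H))"

definition frattini_cover ::
  "('a, 'm) monoid_scheme \<Rightarrow> 'a topology \<Rightarrow> ('b, 'n) monoid_scheme \<Rightarrow> 'b topology \<Rightarrow> ('a \<Rightarrow> 'b) \<Rightarrow> bool" where
  "frattini_cover G T K TK \<phi> \<longleftrightarrow> \<phi> \<in> hom G K \<and> \<phi> ` carrier G = carrier K \<and>
     continuous_map T TK \<phi> \<and>
     {x \<in> carrier G. \<phi> x = \<one>\<^bsub>K\<^esub>} \<subseteq> frattini G T (carrier G)"

end

theory Submission
  imports Defs
begin

(* Suppose x^p lies in Phi(H) but x does not lie in the closed subgroup H. Separate x from H
   by an open normal subgroup N and, among the finitely many subgroups containing N H but not x,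
   pick a maximal one M; then M is a maximal subgroup of the open subgroup U generated by x and M.
   Maximal subgroups of pro-p groups are normal, because modulo a suitable open normal subgroup
   they become maximal subgroups of a finite p-group; this makes the Frattini subgroup monotone,
   so x^p lies in Phi(M). A Frattini cover phi of U has its kernel inside Phi(U), hence inside M,
   so phi induces a bijection between the closed subgroups of U above the kernel and the closed
   subgroups of K. Thus phi(M) is maximal in K and phi(x)^p lies in Phi(phi(M)); the hierarchy
   condition in K gives phi(x) in phi(M), i.e. x in M, a contradiction. *)

section \<open>Subgroups, cosets and conjugation\<close>

lemma (in group_hom) subgroup_vimage:
  assumes "subgroup J H"
  shows "subgroup {x \<in> carrier G. h x \<in> J} G"
  by (rule G.subgroupI) (auto simp: assms subgroup.one_closed subgroup.m_inv_closed subgroup.m_closed)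

lemma (in group) normal_in_subgroupI:
  assumes M: "subgroup M G" and L: "subgroup L G" "L \<subseteq> M"
    and conj: "\<And>m l. m \<in> M \<Longrightarrow> l \<in> L \<Longrightarrow> m \<otimes> l \<otimes> inv m \<in> L"
  shows "L \<lhd> G\<lparr>carrier := M\<rparr>"
  by (rule group.normal_invI[OF subgroup_imp_group[OF M] subgroup_incl[OF L(1) M L(2)]])
    (simp add: M conj)

lemma (in group) mem_set_mult_if_rcoset_mem_image:
  assumes N: "subgroup N G" and a: "a \<in> carrier G" and J: "J \<subseteq> carrier G"
    and image: "N #> a \<in> (\<lambda>b. N #> b) ` J"
  shows "a \<in> N <#> J"
proof -
  obtain j where j: "j \<in> J" "N #> a = N #> j" using image by blast
  have "a \<in> N #> j" using rcos_self[OF a N] j(2) by simp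
  then show ?thesis using j(1) unfolding r_coset_def set_mult_def by blast
qed

lemma (in group) l_coset_eq_vimage:
  "V \<subseteq> carrier G \<Longrightarrow> a \<in> carrier G \<Longrightarrow> a <# V = {y \<in> carrier G. inv a \<otimes> y \<in> V}"
  unfolding l_coset_def by (force simp: m_assoc[symmetric] subsetD)

lemma (in group) conj_mult:
  assumes "x \<in> carrier G" "a \<in> carrier G" "b \<in> carrier G"
  shows "x \<otimes> (a \<otimes> b) \<otimes> inv x = (x \<otimes> a \<otimes> inv x) \<otimes> (x \<otimes> b \<otimes> inv x)"
proof -
  have "inv x \<otimes> (x \<otimes> (b \<otimes> inv x)) = b \<otimes> inv x" using assms by (simp add: m_assoc[symmetric])
  then show ?thesis using assms by (simp add: m_assoc)
qed

lemma (in group) conj_inv: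
  "\<lbrakk>x \<in> carrier G; a \<in> carrier G\<rbrakk> \<Longrightarrow> x \<otimes> inv a \<otimes> inv x = inv (x \<otimes> a \<otimes> inv x)"
  by (simp add: m_assoc inv_mult_group)

lemma (in group) conj_conj:
  "\<lbrakk>x \<in> carrier G; y \<in> carrier G; a \<in> carrier G\<rbrakk> \<Longrightarrow>
    y \<otimes> (x \<otimes> a \<otimes> inv x) \<otimes> inv y = (y \<otimes> x) \<otimes> a \<otimes> inv (y \<otimes> x)"
  by (simp add: m_assoc inv_mult_group)

lemma (in group) subset_set_mult_left: "N \<subseteq> carrier G \<Longrightarrow> subgroup H G \<Longrightarrow> N \<subseteq> N <#> H"
  unfolding set_mult_def using subgroup.one_closed by force

lemma (in group) subset_set_mult_right: "subgroup N G \<Longrightarrow> H \<subseteq> carrier G \<Longrightarrow> H \<subseteq> N <#> H"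
  unfolding set_mult_def using subgroup.one_closed by force

lemma (in group) set_mult_Int_subset_if_rcoset_saturated:
  assumes N: "subgroup N G" and "J \<subseteq> M" "M \<subseteq> carrier G"
    and saturated: "\<And>x j. x \<in> M \<Longrightarrow> j \<in> J \<Longrightarrow> N #> x = N #> j \<Longrightarrow> x \<in> J"
  shows "(N <#> J) \<inter> M \<subseteq> J"
proof
  fix x assume x: "x \<in> (N <#> J) \<inter> M"
  then obtain n j where nj: "n \<in> N" "j \<in> J" "x = n \<otimes> j" unfolding set_mult_def by blast
  have n_carrier: "n \<in> carrier G" and j_carrier: "j \<in> carrier G"
    using nj(1,2) assms(2,3) subgroup.subset[OF N] by auto
  have "N #> x = (N #> n) #> j"
    unfolding nj(3) using coset_mult_assoc[OF subgroup.subset[OF N] n_carrier j_carrier] by simp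
  then have "N #> x = N #> j" using coset_join2[OF n_carrier N nj(1)] by simp
  then show "x \<in> J" using saturated x nj(2) by blast
qed

lemma (in group) finite_subgroups_containing:
  assumes N: "subgroup N G" "finite (rcosets N)"
  shows "finite {J. subgroup J G \<and> N \<subseteq> J}"
proof -
  have "J = \<Union>{C \<in> rcosets N. C \<subseteq> J}" if J: "subgroup J G" "N \<subseteq> J" for J
  proof
    show "J \<subseteq> \<Union>{C \<in> rcosets N. C \<subseteq> J}"
    proof
      fix g assume g: "g \<in> J"
      then have g_carrier: "g \<in> carrier G" using subgroup.mem_carrier[OF J(1)] by blast
      have "N #> g \<subseteq> J" using J g subgroup.m_closed[OF J(1)] unfolding r_coset_def by blast
      then show "g \<in> \<Union>{C \<in> rcosets N. C \<subseteq> J}"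
        using rcos_self[OF g_carrier N(1)] rcosetsI[OF subgroup.subset[OF N(1)] g_carrier] by blast
    qed
  qed blast
  then have "{J. subgroup J G \<and> N \<subseteq> J} \<subseteq> Union ` Pow (rcosets N)" by blast
  then show ?thesis using N(2) finite_subset by blast
qed

section \<open>Finite p-groups\<close>

lemma (in group_action) prime_dvd_card_fixed_points:
  assumes p: "Factorial_Ring.prime p" and order: "Coset.order G = p ^ n"
    and S: "S \<subseteq> E" "finite S" and invariant: "\<And>g x. g \<in> carrier G \<Longrightarrow> x \<in> S \<Longrightarrow> \<phi> g x \<in> S"
    and dvd: "p dvd card S"
  shows "p dvd card {x \<in> S. \<forall>g\<in>carrier G. \<phi> g x = x}"
proof -
  define F where "F = {x \<in> S. \<forall>g\<in>carrier G. \<phi> g x = x}"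
  have orbit_subset: "orbit G \<phi> x \<subseteq> S" if "x \<in> S" for x
    using that invariant unfolding orbit_def by blast
  have "\<one> \<in> carrier G"
    using group_hom.axioms(1)[OF group_hom] by (simp add: group.is_monoid)
  then have fixed_orbit: "orbit G \<phi> x = {x}" if "x \<in> F" for x
    using that unfolding F_def orbit_def by force
  have orbit_outside_F: "orbit G \<phi> x \<subseteq> S - F" if x: "x \<in> S - F" for x
  proof
    fix y assume y: "y \<in> orbit G \<phi> x"
    have "y \<notin> F"
    proof
      assume "y \<in> F"
      then have "x \<in> orbit G \<phi> y"
        using orbit_sym[OF _ _ y] x orbit_subset S(1) y by blast
      then show False using fixed_orbit[OF \<open>y \<in> F\<close>] \<open>y \<in> F\<close> x by auto
    qed
    then show "y \<in> S - F" using y orbit_subset x by blast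
  qed
  have p_dvd_orbit: "p dvd card (orbit G \<phi> x)" if x: "x \<in> S - F" for x
  proof -
    have "card (orbit G \<phi> x) dvd p ^ n"
      using orbit_stabilizer_theorem[of x] x S(1) order by (metis DiffD1 dvd_triv_left subsetD)
    then obtain i where i: "card (orbit G \<phi> x) = p ^ i"
      using divides_primepow_nat[OF p] by blast
    have "i \<noteq> 0"
    proof
      assume "i = 0"
      then obtain y where "orbit G \<phi> x = {y}" using i card_1_singletonE by auto
      moreover have "x \<in> orbit G \<phi> x" using orbit_refl x S(1) by blast
      ultimately have "orbit G \<phi> x = {x}" by simp
      then have "x \<in> F" using x unfolding F_def orbit_def by blast
      then show False using x by blast
    qed
    then show ?thesis using i by (simp add: dvd_power)
  qed
  have "S - F = \<Union> (orbit G \<phi> ` (S - F))"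
    using orbit_outside_F orbit_refl S(1) by blast
  moreover have "pairwise disjnt (orbit G \<phi> ` (S - F))"
    using disjoint_union S(1) unfolding pairwise_def disjnt_def orbits_def by blast
  moreover have "finite A" if "A \<in> orbit G \<phi> ` (S - F)" for A
    using that orbit_outside_F S(2) finite_subset by blast
  ultimately have "card (S - F) = sum card (orbit G \<phi> ` (S - F))"
    by (metis card_Union_disjoint)
  moreover have "p dvd sum card (orbit G \<phi> ` (S - F))"
    using p_dvd_orbit by (intro dvd_sum) auto
  ultimately have "p dvd card (S - F)" by simp
  moreover have "F \<subseteq> S" unfolding F_def by blast
  then have "card S = card F + card (S - F)"
    using card_Diff_subset[OF finite_subset[OF _ S(2)]] card_mono[OF S(2)] by fastforce
  ultimately show ?thesis
    using dvd unfolding F_def by (simp add: dvd_add_left_iff)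
qed

lemma (in group) l_r_coset_eq_conj_image:
  "A \<subseteq> carrier G \<Longrightarrow> g \<in> carrier G \<Longrightarrow> (g <# A) #> inv g = (\<lambda>a. g \<otimes> a \<otimes> inv g) ` A"
  by (auto simp: l_coset_def r_coset_def)

lemma (in group) mem_normalizer_iff:
  "A \<subseteq> carrier G \<Longrightarrow> g \<in> normalizer G A \<longleftrightarrow> g \<in> carrier G \<and> (g <# A) #> inv g = A"
  by (simp add: normalizer_def stabilizer_def)

lemma (in group) subgroup_subset_normalizer:
  assumes "subgroup A G"
  shows "A \<subseteq> normalizer G A"
  using assms by (auto simp: mem_normalizer_iff subgroup.subset subgroup.mem_carrier
      coset_join2 coset_join3 subgroup.m_inv_closed)

lemma (in group) conj_r_coset:
  assumes A: "subgroup A G" and a: "a \<in> A" and g: "g \<in> carrier G"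
  shows "(a <# (A #> g)) #> inv a = A #> (g \<otimes> inv a)"
proof -
  have A_carrier: "A \<subseteq> carrier G" and a_carrier: "a \<in> carrier G"
    using subgroup.subset[OF A] a by auto
  have "(a <# (A #> g)) #> inv a = (a <# A) #> g #> inv a"
    using coset_assoc[OF a_carrier g A_carrier] by simp
  also have "\<dots> = A #> (g \<otimes> inv a)"
    using coset_join3[OF a_carrier A a] by (simp add: coset_mult_assoc A_carrier g a_carrier)
  finally show ?thesis .
qed

lemma (in group) mem_normalizer_if_conj_closed:
  assumes A: "subgroup A G" "finite A" and g: "g \<in> carrier G"
    and conj: "\<And>a. a \<in> A \<Longrightarrow> g \<otimes> a \<otimes> inv g \<in> A"
  shows "g \<in> normalizer G A"
proof -
  have A_carrier: "A \<subseteq> carrier G" using subgroup.subset[OF A(1)] .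
  have "inj_on (\<lambda>a. g \<otimes> a \<otimes> inv g) A"
    using A_carrier g by (intro inj_onI) (metis subsetD inv_closed m_closed r_cancel l_cancel)
  then have "card ((g <# A) #> inv g) = card A"
    using l_r_coset_eq_conj_image[OF A_carrier g] card_image by simp
  moreover have "(g <# A) #> inv g \<subseteq> A"
    using conj l_r_coset_eq_conj_image[OF A_carrier g] by auto
  ultimately have "(g <# A) #> inv g = A" using card_subset_eq[OF A(2)] by blast
  then show ?thesis using mem_normalizer_iff[OF A_carrier] g by blast
qed

lemma (in group) finite_p_group_exists_fixed_coset:
  assumes p: "Factorial_Ring.prime p" and order: "Coset.order G = p ^ n"
    and A: "subgroup A G" "A \<noteq> carrier G"
  shows "\<exists>g\<in>carrier G. g \<notin> A \<and> (\<forall>a\<in>A. A #> (g \<otimes> inv a) = A #> g)"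
proof -
  have fin: "finite (carrier G)"
    using order p order_gt_0_iff_finite by (metis prime_gt_0_nat zero_less_power)
  have A_carrier: "A \<subseteq> carrier G" using subgroup.subset[OF A(1)] .
  have rcosets_Pow: "rcosets A \<subseteq> Pow (carrier G)"
    using subgroup.rcosets_carrier[OF A(1) is_group] by blast
  then have fin_rcosets: "finite (rcosets A)" using fin by (meson finite_Pow_iff finite_subset)
  \<comment> \<open>\<open>A\<close> acts on its right cosets by conjugation, moving \<open>A #> g\<close> to \<open>A #> (g \<otimes> inv a)\<close>;
    \<open>A\<close> itself is fixed, and the number of fixed cosets is divisible by \<open>p\<close>.\<close>
  define \<psi> where "\<psi> = (\<lambda>g. \<lambda>H \<in> {H. H \<subseteq> carrier G}. (g <# H) #> inv g)"
  have shift: "\<psi> a (A #> g) = A #> (g \<otimes> inv a)" if "a \<in> A" "g \<in> carrier G" for a g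
    using conj_r_coset[OF A(1) that] r_coset_subset_G[OF A_carrier that(2)] unfolding \<psi>_def by simp
  have "card (rcosets A) * card A = p ^ n" using lagrange[OF A(1)] order by simp
  then obtain b c where b: "card A = p ^ b" and c: "card (rcosets A) = p ^ c"
    using divides_primepow_nat[OF p] by (metis dvd_triv_left dvd_triv_right)
  have "c \<noteq> 0"
  proof
    assume "c = 0"
    then have "card A = card (carrier G)" using c \<open>card (rcosets A) * card A = p ^ n\<close> order
      by (simp add: Coset.order_def)
    then show False using card_subset_eq[OF fin A_carrier] A(2) by simp
  qed
  define Fix where "Fix = {C \<in> rcosets A. \<forall>a\<in>carrier (G\<lparr>carrier := A\<rparr>). \<psi> a C = C}"
  have "p dvd card Fix"
    unfolding Fix_def
  proof (rule group_action.prime_dvd_card_fixed_points)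
    show "group_action (G\<lparr>carrier := A\<rparr>) {H. H \<subseteq> carrier G} \<psi>"
      unfolding \<psi>_def by (rule group_action.induced_action[OF action_by_conjugation_on_power_set A(1)])
    show "Coset.order (G\<lparr>carrier := A\<rparr>) = p ^ b" using b by (simp add: Coset.order_def)
    show "p dvd card (rcosets A)" using c \<open>c \<noteq> 0\<close> by (simp add: dvd_power)
    show "\<psi> a C \<in> rcosets A" if "a \<in> carrier (G\<lparr>carrier := A\<rparr>)" "C \<in> rcosets A" for a C
      using that shift A_carrier by (auto simp: RCOSETS_def subgroup.mem_carrier[OF A(1)])
  qed (use p rcosets_Pow fin_rcosets in auto)
  have A_Fix: "A \<in> Fix"
    using shift[OF _ one_closed] rcosetsI[OF A_carrier one_closed] A_carrier
      coset_join2[OF _ A(1) subgroup.m_inv_closed[OF A(1)]]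
    unfolding Fix_def by (simp add: subgroup.mem_carrier[OF A(1)] subgroup.m_inv_closed[OF A(1)])
  have "finite Fix" using fin_rcosets unfolding Fix_def by simp
  then have "card Fix > 0" using A_Fix card_gt_0_iff by blast
  then have "p \<le> card Fix" using dvd_imp_le[OF \<open>p dvd card Fix\<close>] by blast
  then have "Fix \<noteq> {A}" using prime_ge_2_nat[OF p] by auto
  then obtain g where g: "g \<in> carrier G" "A #> g \<in> Fix" "A #> g \<noteq> A"
    using A_Fix unfolding Fix_def RCOSETS_def by blast
  then have "g \<notin> A" using coset_join2[OF _ A(1)] by blast
  moreover have "A #> (g \<otimes> inv a) = A #> g" if "a \<in> A" for a
    using g(2) shift[OF that g(1)] that unfolding Fix_def by simp
  ultimately show ?thesis using g(1) by blast
qed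

lemma (in group) finite_p_group_subgroup_psubset_normalizer:
  assumes p: "Factorial_Ring.prime p" and order: "Coset.order G = p ^ n"
    and A: "subgroup A G" "A \<noteq> carrier G"
  shows "A \<subset> normalizer G A"
proof -
  obtain g where g: "g \<in> carrier G" "g \<notin> A" and fixed: "\<And>a. a \<in> A \<Longrightarrow> A #> (g \<otimes> inv a) = A #> g"
    using finite_p_group_exists_fixed_coset[OF p order A] by blast
  have "g \<otimes> a \<otimes> inv g \<in> A" if a: "a \<in> A" for a
  proof -
    have a_carrier: "a \<in> carrier G" using subgroup.mem_carrier[OF A(1) a] .
    have "A #> (g \<otimes> a) = A #> g"
      using fixed[OF subgroup.m_inv_closed[OF A(1) a]] a_carrier by simp
    then have "g \<otimes> a \<in> A #> g" using rcos_self[OF _ A(1)] g(1) a_carrier by (metis m_closed)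
    then show ?thesis using subgroup.rcos_module_imp[OF A(1) is_group g(1)] by blast
  qed
  moreover have "finite A"
    using order p order_gt_0_iff_finite subgroup.subset[OF A(1)] finite_subset
    by (metis prime_gt_0_nat zero_less_power)
  ultimately have "g \<in> normalizer G A" using mem_normalizer_if_conj_closed[OF A(1) _ g(1)] by blast
  then show ?thesis using subgroup_subset_normalizer[OF A(1)] g(2) by blast
qed

lemma (in group) finite_p_group_maximal_subgroup_normal:
  assumes p: "Factorial_Ring.prime p" and order: "Coset.order G = p ^ n"
    and A: "subgroup A G" "A \<noteq> carrier G"
    and maximal: "\<And>J. subgroup J G \<Longrightarrow> A \<subseteq> J \<Longrightarrow> J = A \<or> J = carrier G"
  shows "A \<lhd> G"
proof -
  have A_carrier: "A \<subseteq> carrier G" using subgroup.subset[OF A(1)] .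
  have "normalizer G A = carrier G"
    using maximal[OF normalizer_imp_subgroup[OF A_carrier]]
      finite_p_group_subgroup_psubset_normalizer[OF p order A] by blast
  then have "(x <# A) #> inv x = A" if "x \<in> carrier G" for x
    using that mem_normalizer_iff[OF A_carrier] by blast
  then show ?thesis
    using A(1) l_r_coset_eq_conj_image[OF A_carrier] by (auto simp: normal_inv_iff)
qed

lemma (in group) finite_p_group_subgroup_order:
  assumes p: "Factorial_Ring.prime p" and order: "Coset.order G = p ^ n" and H: "subgroup H G"
  shows "\<exists>m. Coset.order (G\<lparr>carrier := H\<rparr>) = p ^ m"
proof -
  have "card H dvd p ^ n" using lagrange[OF H] order by (metis dvd_triv_right)
  then obtain m where "card H = p ^ m" using divides_primepow_nat[OF p] by blast
  then show ?thesis by (auto simp: Coset.order_def)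
qed

lemma (in group_hom) maximal_subgroup_image:
  assumes M: "subgroup M G" and L: "subgroup L G" "L \<subseteq> M"
    and maximal: "\<And>J. subgroup J G \<Longrightarrow> L \<subseteq> J \<Longrightarrow> J \<subseteq> M \<Longrightarrow>
      (\<And>x j. x \<in> M \<Longrightarrow> j \<in> J \<Longrightarrow> h x = h j \<Longrightarrow> x \<in> J) \<Longrightarrow> J = L \<or> J = M"
    and Jb: "subgroup Jb (H\<lparr>carrier := h ` M\<rparr>)" "h ` L \<subseteq> Jb"
  shows "Jb = h ` L \<or> Jb = h ` M"
proof -
  have Jb_M: "Jb \<subseteq> h ` M" using subgroup.subset[OF Jb(1)] by simp
  define J where "J = M \<inter> {x \<in> carrier G. h x \<in> Jb}"
  have "subgroup J G"
    using G.subgroups_Inter_pair[OF M subgroup_vimage[OF H.incl_subgroup[OF subgroup_img_is_subgroup[OF M] Jb(1)]]]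
    unfolding J_def .
  moreover have "L \<subseteq> J" using Jb(2) L subgroup.subset unfolding J_def by blast
  moreover have "x \<in> J" if "x \<in> M" "j \<in> J" "h x = h j" for x j
    using that subgroup.subset[OF M] unfolding J_def by auto
  ultimately have "J = L \<or> J = M" using maximal[of J] unfolding J_def by blast
  moreover have "h ` J = Jb" using Jb_M subgroup.subset[OF M] unfolding J_def by blast
  ultimately show ?thesis by blast
qed

text \<open>The condition \<open>(N <#> J) \<inter> M \<subseteq> J\<close> replaces closedness: it says that \<open>J\<close> is the trace
  on \<open>M\<close> of the subgroup \<open>N <#> J\<close>, which is open when \<open>N\<close> is. Such subgroups correspond to
  subgroups of the image of \<open>M\<close> in the finite \<open>p\<close>-group \<open>G Mod N\<close>.\<close>

lemma (in group) maximal_saturated_subgroup_normal: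
  assumes p: "Factorial_Ring.prime p" and N: "N \<lhd> G" "card (rcosets N) = p ^ k"
    and M: "subgroup M G" and L: "subgroup L G" "L \<subset> M"
    and saturated: "(N <#> L) \<inter> M \<subseteq> L"
    and maximal: "\<And>J. subgroup J G \<Longrightarrow> L \<subseteq> J \<Longrightarrow> J \<subseteq> M \<Longrightarrow> (N <#> J) \<inter> M \<subseteq> J \<Longrightarrow> J = L \<or> J = M"
  shows "L \<lhd> G\<lparr>carrier := M\<rparr>"
proof -
  define Q where "Q = G Mod N"
  define \<pi> where "\<pi> = (\<lambda>a. N #> a)"
  have N_subgroup: "subgroup N G" using normal_imp_subgroup[OF N(1)] .
  interpret \<pi>: group_hom G Q \<pi>
    unfolding Q_def \<pi>_def using normal.factorgroup_is_group[OF N(1)] normal.r_coset_hom_Mod[OF N(1)]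
    by (simp add: group_hom_def group_hom_axioms_def is_group)
  have order_Q: "Coset.order Q = p ^ k" using N(2) by (simp add: Q_def Coset.order_def FactGroup_def)
  have M_carrier: "M \<subseteq> carrier G" and L_carrier: "L \<subseteq> carrier G"
    using subgroup.subset M L(1) by auto
  have in_set_mult: "x \<in> N <#> J" if "x \<in> carrier G" "J \<subseteq> carrier G" "\<pi> x \<in> \<pi> ` J" for x J
    using mem_set_mult_if_rcoset_mem_image[OF N_subgroup that(1,2)] that(3) unfolding \<pi>_def .
  define Q' where "Q' = Q\<lparr>carrier := \<pi> ` M\<rparr>"
  have M_image: "subgroup (\<pi> ` M) Q" using \<pi>.subgroup_img_is_subgroup[OF M] .
  have L_image: "subgroup (\<pi> ` L) Q'"
    unfolding Q'_def using \<pi>.H.subgroup_incl[OF \<pi>.subgroup_img_is_subgroup[OF L(1)] M_image] L(2) by blast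
  have "\<pi> ` L \<noteq> carrier Q'"
  proof
    assume image_eq: "\<pi> ` L = carrier Q'"
    obtain y where y: "y \<in> M" "y \<notin> L" using L(2) by blast
    then have "\<pi> y \<in> \<pi> ` L" using image_eq unfolding Q'_def by simp
    then have "y \<in> N <#> L" by (rule in_set_mult[OF subsetD[OF M_carrier y(1)] L_carrier])
    then show False using saturated y by blast
  qed
  moreover have "Jb = \<pi> ` L \<or> Jb = carrier Q'" if "subgroup Jb Q'" "\<pi> ` L \<subseteq> Jb" for Jb
  proof -
    have maximal_saturated: "J = L \<or> J = M" if J: "subgroup J G" "L \<subseteq> J" "J \<subseteq> M"
      and saturated_J: "\<And>x j. x \<in> M \<Longrightarrow> j \<in> J \<Longrightarrow> \<pi> x = \<pi> j \<Longrightarrow> x \<in> J" for J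
      using saturated_J unfolding \<pi>_def
      by (rule maximal[OF J set_mult_Int_subset_if_rcoset_saturated[OF N_subgroup J(3) M_carrier]])
    have "Jb = \<pi> ` L \<or> Jb = \<pi> ` M"
      by (rule \<pi>.maximal_subgroup_image[OF M L(1) psubset_imp_subset[OF L(2)] maximal_saturated
            that[unfolded Q'_def]])
    then show ?thesis unfolding Q'_def by simp
  qed
  moreover have "group Q'" unfolding Q'_def by (rule \<pi>.H.subgroup_imp_group[OF M_image])
  moreover obtain m where "Coset.order Q' = p ^ m"
    using \<pi>.H.finite_p_group_subgroup_order[OF p order_Q M_image] unfolding Q'_def by blast
  ultimately have L_normal: "\<pi> ` L \<lhd> Q'"
    using group.finite_p_group_maximal_subgroup_normal[OF _ p _ L_image] by blast
  show ?thesis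
  proof (rule normal_in_subgroupI[OF M L(1)])
    show "L \<subseteq> M" using L(2) by blast
    fix m l assume m: "m \<in> M" and l: "l \<in> L"
    have "\<pi> m \<otimes>\<^bsub>Q'\<^esub> \<pi> l \<otimes>\<^bsub>Q'\<^esub> inv\<^bsub>Q'\<^esub> \<pi> m \<in> \<pi> ` L"
      using normal.inv_op_closed2[OF L_normal] m l unfolding Q'_def by auto
    moreover have "\<pi> (m \<otimes> l \<otimes> inv m) = \<pi> m \<otimes>\<^bsub>Q'\<^esub> \<pi> l \<otimes>\<^bsub>Q'\<^esub> inv\<^bsub>Q'\<^esub> \<pi> m"
      using m l M_carrier L_carrier \<pi>.H.m_inv_consistent[OF M_image] unfolding Q'_def
      by (simp add: subsetD)
    ultimately have "\<pi> (m \<otimes> l \<otimes> inv m) \<in> \<pi> ` L" by simp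
    moreover have "m \<otimes> l \<otimes> inv m \<in> M"
      using m l L(2) M by (meson psubsetD subgroup.m_closed subgroup.m_inv_closed)
    ultimately have "m \<otimes> l \<otimes> inv m \<in> N <#> L"
      by (intro in_set_mult[OF subsetD[OF M_carrier] L_carrier])
    then show "m \<otimes> l \<otimes> inv m \<in> L"
      using saturated \<open>m \<otimes> l \<otimes> inv m \<in> M\<close> by blast
  qed
qed

section \<open>Topological and profinite groups\<close>

lemma openin_tube:
  assumes TX: "compact_space TX" and f: "continuous_map (prod_topology TX TY) TZ f"
    and C: "closedin TX C" and V: "openin TZ V"
  shows "openin TY {y \<in> topspace TY. \<forall>x\<in>C. f (x, y) \<in> V}"
proof -
  define B where "B = {z \<in> topspace (prod_topology TX TY). fst z \<in> C \<and> f z \<in> topspace TZ - V}"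
  have "B = {z \<in> topspace (prod_topology TX TY). fst z \<in> C} \<inter>
      {z \<in> topspace (prod_topology TX TY). f z \<in> topspace TZ - V}"
    unfolding B_def by blast
  then have "closedin (prod_topology TX TY) B"
    using closedin_continuous_map_preimage[OF continuous_map_fst C]
      closedin_continuous_map_preimage[OF f closedin_diff[OF closedin_topspace V]] by auto
  then have "closedin TY (snd ` B)" using closed_map_snd[OF TX] unfolding closed_map_def by blast
  moreover have "{y \<in> topspace TY. \<forall>x\<in>C. f (x, y) \<in> V} = topspace TY - snd ` B"
    using closedin_subset[OF C] continuous_map_image_subset_topspace[OF f]
    unfolding B_def by (force simp: image_iff)
  ultimately show ?thesis by (simp add: openin_diff)
qed

lemma exists_clopen_nhood_disjoint:
  assumes "compact_space TX" "Hausdorff_space TX" and x: "connected_component_of_set TX x = {x}"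
    and C: "closedin TX C" "x \<notin> C"
  shows "\<exists>W. openin TX W \<and> closedin TX W \<and> x \<in> W \<and> W \<inter> C = {}"
proof -
  have "separated_between TX {x} C"
  proof (rule cut_wire_fence_theorem_gen)
    show "compactin TX {x}" using x connected_component_of_eq_empty by fastforce
    show "disjnt D {x} \<or> disjnt D C" if "connectedin TX D" for D
      using connected_component_of_maximal[OF that, of x] x C(2) by (cases "x \<in> D") (auto simp: disjnt_def)
  qed (use assms in auto)
  then show ?thesis unfolding separated_between by blast
qed

locale topgroup =
  fixes G (structure) and T
  assumes topological_group: "topological_group G T"

sublocale topgroup \<subseteq> group G
  using topological_group by (simp add: topological_group_def)

context topgroup
begin

lemma topspace_eq [simp]: "topspace T = carrier G"
  using topological_group by (simp add: topological_group_def)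

lemma continuous_map_mult_prod: "continuous_map (prod_topology T T) T (\<lambda>(x, y). x \<otimes> y)"
  using topological_group by (simp add: topological_group_def)

lemma continuous_map_mult:
  assumes "continuous_map S T f" "continuous_map S T g"
  shows "continuous_map S T (\<lambda>x. f x \<otimes> g x)"
  using continuous_map_compose[OF continuous_map_pairedI[OF assms] continuous_map_mult_prod]
  by (simp add: o_def)

lemma continuous_map_inv:
  assumes "continuous_map S T f"
  shows "continuous_map S T (\<lambda>x. inv (f x))"
proof -
  have "continuous_map T T (\<lambda>x. inv x)"
    using topological_group by (simp add: topological_group_def)
  from continuous_map_compose[OF assms this] show ?thesis by (simp add: o_def)
qed

lemma continuous_map_l_translation: "a \<in> carrier G \<Longrightarrow> continuous_map T T (\<lambda>y. a \<otimes> y)"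
  using continuous_map_mult[OF _ continuous_map_id[unfolded id_def], of "\<lambda>_. a"] by simp

lemma openin_l_coset: "openin T V \<Longrightarrow> a \<in> carrier G \<Longrightarrow> openin T (a <# V)"
  using openin_continuous_map_preimage[OF continuous_map_l_translation[of "inv a"]]
    l_coset_eq_vimage[of V a] openin_subset[of T V] by simp

lemma closedin_l_coset: "closedin T V \<Longrightarrow> a \<in> carrier G \<Longrightarrow> closedin T (a <# V)"
  using closedin_continuous_map_preimage[OF continuous_map_l_translation[of "inv a"]]
    l_coset_eq_vimage[of V a] closedin_subset[of T V] by simp

lemma openin_subgroup_mono:
  assumes V: "subgroup V G" "openin T V" and J: "subgroup J G" "V \<subseteq> J"
  shows "openin T J"
proof -
  have "J = (\<Union>j\<in>J. j <# V)"
  proof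
    show "J \<subseteq> (\<Union>j\<in>J. j <# V)" using lcos_self[OF _ V(1)] subgroup.mem_carrier[OF J(1)] by blast
    show "(\<Union>j\<in>J. j <# V) \<subseteq> J" using J subgroup.m_closed[OF J(1)] unfolding l_coset_def by blast
  qed
  moreover have "openin T (\<Union>j\<in>J. j <# V)"
    using openin_l_coset[OF V(2)] subgroup.mem_carrier[OF J(1)] by blast
  ultimately show ?thesis by simp
qed

lemma closedin_open_subgroup:
  assumes V: "subgroup V G" "openin T V"
  shows "closedin T V"
proof -
  have "carrier G - V = (\<Union>g\<in>carrier G - V. g <# V)"
  proof
    show "carrier G - V \<subseteq> (\<Union>g\<in>carrier G - V. g <# V)" using lcos_self[OF _ V(1)] by blast
    have "(g <# V) \<inter> V = {}" if "g \<in> carrier G" "g \<notin> V" for g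
    proof (rule ccontr)
      assume "(g <# V) \<inter> V \<noteq> {}"
      then obtain y where "y \<in> g <# V" "y \<in> V" by blast
      then have "g <# V = V" using l_repr_independence[OF _ _ V(1)] coset_join3[OF _ V(1)] that(1)
        by (metis subgroup.mem_carrier[OF V(1)])
      then show False using lcos_self[OF that(1) V(1)] that(2) by blast
    qed
    then show "(\<Union>g\<in>carrier G - V. g <# V) \<subseteq> carrier G - V"
      using l_coset_subset_G[OF subgroup.subset[OF V(1)]] by blast
  qed
  moreover have "openin T (\<Union>g\<in>carrier G - V. g <# V)" using openin_l_coset[OF V(2)] by blast
  ultimately show ?thesis using subgroup.subset[OF V(1)] by (simp add: closedin_def)
qed

end

locale profinite = topgroup +
  assumes compact: "compact_space T" and Hausdorff: "Hausdorff_space T"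
    and totally_disconnected: "x \<in> carrier G \<Longrightarrow> connected_component_of_set T x = {x}"

context profinite
begin

lemma closedin_set_mult:
  assumes "closedin T A" "closedin T B"
  shows "closedin T (A <#> B)"
proof -
  have "A <#> B = (\<lambda>(a, b). a \<otimes> b) ` (A \<times> B)" unfolding set_mult_def by force
  moreover have "compactin (prod_topology T T) (A \<times> B)"
    using compactin_Times closedin_compact_space[OF compact] assms by blast
  ultimately have "compactin T (A <#> B)" using image_compactin continuous_map_mult_prod by metis
  then show ?thesis using compactin_imp_closedin Hausdorff by blast
qed

lemma exists_open_subgroup_in_clopen:
  assumes W: "openin T W" "closedin T W" "\<one> \<in> W"
  shows "\<exists>S. subgroup S G \<and> openin T S \<and> S \<subseteq> W"
proof -
  have W_carrier: "W \<subseteq> carrier G" using openin_subset[OF W(1)] by simp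
  define S where "S = {g \<in> carrier G. \<forall>y\<in>W. y \<otimes> g \<in> W \<and> y \<otimes> inv g \<in> W}"
  have open1: "openin T {g \<in> topspace T. \<forall>y\<in>W. y \<otimes> g \<in> W}"
    using openin_tube[OF compact continuous_map_mult_prod W(2,1)] by simp
  have open2: "openin T {g \<in> topspace T. \<forall>y\<in>W. y \<otimes> inv g \<in> W}"
    using openin_tube[OF compact continuous_map_mult[OF continuous_map_fst continuous_map_inv[OF continuous_map_snd]] W(2,1)]
    by simp
  have "S = {g \<in> topspace T. \<forall>y\<in>W. y \<otimes> g \<in> W} \<inter> {g \<in> topspace T. \<forall>y\<in>W. y \<otimes> inv g \<in> W}"
    unfolding S_def by auto
  then have S_open: "openin T S" using openin_Int[OF open1 open2] by simp
  have "subgroup S G"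
  proof (rule subgroupI)
    show "S \<subseteq> carrier G" unfolding S_def by blast
    have "\<one> \<in> S" using W_carrier unfolding S_def by (simp add: subsetD)
    then show "S \<noteq> {}" by blast
  next
    fix a assume "a \<in> S"
    then show "inv a \<in> S" unfolding S_def by simp
  next
    fix a b assume a: "a \<in> S" and b: "b \<in> S"
    then have a_carrier: "a \<in> carrier G" and b_carrier: "b \<in> carrier G" unfolding S_def by auto
    have "y \<otimes> (a \<otimes> b) \<in> W \<and> y \<otimes> inv (a \<otimes> b) \<in> W" if y: "y \<in> W" for y
    proof
      have "y \<otimes> a \<otimes> b \<in> W" using a b y unfolding S_def by blast
      then show "y \<otimes> (a \<otimes> b) \<in> W" using y W_carrier a_carrier b_carrier by (simp add: m_assoc subsetD)
      have "y \<otimes> inv b \<otimes> inv a \<in> W" using a b y unfolding S_def by blast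
      then show "y \<otimes> inv (a \<otimes> b) \<in> W"
        using y W_carrier a_carrier b_carrier by (simp add: m_assoc inv_mult_group subsetD)
    qed
    then show "a \<otimes> b \<in> S" unfolding S_def using a_carrier b_carrier by simp
  qed
  moreover have "S \<subseteq> W"
  proof
    fix g assume "g \<in> S"
    then have "\<one> \<otimes> g \<in> W" "g \<in> carrier G" using W(3) unfolding S_def by blast+
    then show "g \<in> W" by simp
  qed
  ultimately show ?thesis using S_open by blast
qed

lemma exists_open_normal_subgroup_in:
  assumes S: "subgroup S G" "openin T S"
  shows "\<exists>N. N \<lhd> G \<and> openin T N \<and> N \<subseteq> S"
proof -
  define N where "N = {g \<in> carrier G. \<forall>y\<in>carrier G. y \<otimes> g \<otimes> inv y \<in> S}"
  have "openin T N"
    using openin_tube[OF compact continuous_map_mult[OF continuous_map_mult_prod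
        continuous_map_inv[OF continuous_map_fst]] closedin_topspace S(2)]
    unfolding N_def by (simp add: case_prod_unfold)
  moreover have "N \<lhd> G"
  proof (rule normal_invI)
    show "subgroup N G"
    proof (rule subgroupI)
      show "N \<subseteq> carrier G" unfolding N_def by blast
      show "N \<noteq> {}" using subgroup.one_closed[OF S(1)] unfolding N_def by (auto intro!: exI[of _ \<one>])
    next
      fix a assume "a \<in> N"
      then show "inv a \<in> N"
        using conj_inv subgroup.m_inv_closed[OF S(1)] unfolding N_def by simp
    next
      fix a b assume "a \<in> N" "b \<in> N"
      then show "a \<otimes> b \<in> N"
        using conj_mult subgroup.m_closed[OF S(1)] unfolding N_def by simp
    qed
  next
    fix x h assume "x \<in> carrier G" "h \<in> N"
    then show "x \<otimes> h \<otimes> inv x \<in> N" using conj_conj unfolding N_def by simp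
  qed
  moreover have "N \<subseteq> S"
  proof
    fix g assume "g \<in> N"
    then have "\<one> \<otimes> g \<otimes> inv \<one> \<in> S" "g \<in> carrier G" unfolding N_def by blast+
    then show "g \<in> S" by simp
  qed
  ultimately show ?thesis by blast
qed

lemma exists_open_normal_subgroup_avoiding:
  assumes H: "closed_subgroup G T H" and x: "x \<in> carrier G" "x \<notin> H"
  shows "\<exists>N. N \<lhd> G \<and> openin T N \<and> x \<notin> N <#> H"
proof -
  have H_subgroup: "subgroup H G" and "closedin T H" using H unfolding closed_subgroup_def by auto
  then have "closedin T (x <# H)" using closedin_l_coset x(1) by blast
  moreover have "\<one> \<notin> x <# H"
  proof
    assume "\<one> \<in> x <# H"
    then obtain h where "h \<in> H" "\<one> = x \<otimes> h" unfolding l_coset_def by blast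
    then have "x = inv h" using x(1) subgroup.mem_carrier[OF H_subgroup] by (metis inv_equality)
    then show False using subgroup.m_inv_closed[OF H_subgroup \<open>h \<in> H\<close>] x(2) by simp
  qed
  ultimately obtain W where W: "openin T W" "closedin T W" "\<one> \<in> W" "W \<inter> (x <# H) = {}"
    using exists_clopen_nhood_disjoint[OF compact Hausdorff totally_disconnected[OF one_closed]] by blast
  obtain S where S: "subgroup S G" "openin T S" "S \<subseteq> W" using exists_open_subgroup_in_clopen[OF W(1-3)] by blast
  obtain N where N: "N \<lhd> G" "openin T N" "N \<subseteq> S" using exists_open_normal_subgroup_in[OF S(1,2)] by blast
  have "x \<notin> N <#> H"
  proof
    assume "x \<in> N <#> H"
    then obtain n h where nh: "n \<in> N" "h \<in> H" "x = n \<otimes> h" unfolding set_mult_def by blast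
    moreover have "n \<in> carrier G" "h \<in> carrier G"
      using nh subgroup.mem_carrier[OF normal_imp_subgroup[OF N(1)]] subgroup.mem_carrier[OF H_subgroup] by auto
    ultimately have "n = x \<otimes> inv h" by (simp add: m_assoc)
    then have "n \<in> x <# H" unfolding l_coset_def using subgroup.m_inv_closed[OF H_subgroup nh(2)] by blast
    then show False using nh(1) N(3) S(3) W(4) by blast
  qed
  then show ?thesis using N(1,2) by blast
qed

end

section \<open>Pro-p groups\<close>

locale pro_p = profinite +
  fixes p :: nat
  assumes prime: "Factorial_Ring.prime p"
    and index_open_normal: "N \<lhd> G \<Longrightarrow> openin T N \<Longrightarrow> \<exists>k. card (rcosets N) = p ^ k"

lemma pro_pI:
  assumes "Factorial_Ring.prime p" "pro_p_group G T p"
  shows "pro_p G T p"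
proof -
  have "topological_group G T" "compact_space T" "Hausdorff_space T"
    "\<forall>x\<in>topspace T. connected_component_of_set T x = {x}"
    "\<forall>N. N \<lhd> G \<and> openin T N \<longrightarrow> (\<exists>k. card (rcosets\<^bsub>G\<^esub> N) = p ^ k)"
    using assms(2) unfolding pro_p_group_def profinite_group_def by auto
  moreover have "topspace T = carrier G" using \<open>topological_group G T\<close> by (simp add: topological_group_def)
  ultimately show ?thesis using assms(1)
    by (intro pro_p.intro profinite.intro topgroup.intro profinite_axioms.intro pro_p_axioms.intro) auto
qed

context pro_p
begin

lemma finite_rcosets_open_normal: "N \<lhd> G \<Longrightarrow> openin T N \<Longrightarrow> finite (rcosets N)"
  using index_open_normal prime_gt_0_nat[OF prime] card_ge_0_finite by (metis zero_less_power)

lemma exists_maximal_open_subgroup_avoiding: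
  assumes H: "closed_subgroup G T H" and x: "x \<in> carrier G" "x \<notin> H"
  shows "\<exists>U M. open_subgroup G T U \<and> maximal_subgroup_of G T U M \<and> H \<subseteq> M \<and> x \<in> U \<and> x \<notin> M"
proof -
  obtain N where N: "N \<lhd> G" "openin T N" "x \<notin> N <#> H"
    using exists_open_normal_subgroup_avoiding[OF H x] by blast
  have N_subgroup: "subgroup N G" using normal_imp_subgroup[OF N(1)] .
  have H_subgroup: "subgroup H G" using H unfolding closed_subgroup_def by blast
  define Fam where "Fam = {J. subgroup J G \<and> N <#> H \<subseteq> J \<and> x \<notin> J}"
  have "Fam \<subseteq> {J. subgroup J G \<and> N \<subseteq> J}"
    using subset_set_mult_left[OF subgroup.subset[OF N_subgroup] H_subgroup] unfolding Fam_def by blast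
  then have "finite Fam"
    using finite_subgroups_containing[OF N_subgroup finite_rcosets_open_normal[OF N(1,2)]] finite_subset by blast
  moreover have "N <#> H \<in> Fam" unfolding Fam_def using mult_norm_subgroup[OF N(1) H_subgroup] N(3) by blast
  ultimately obtain M where "M \<in> Fam" and M_maximal: "\<forall>J\<in>Fam. M \<subseteq> J \<longrightarrow> M = J"
    using finite_has_maximal[of Fam] by blast
  then have M: "subgroup M G" "N <#> H \<subseteq> M" "x \<notin> M" unfolding Fam_def by blast+
  have "openin T M"
    using openin_subgroup_mono[OF N_subgroup N(2) M(1)] M(2)
      subset_set_mult_left[OF subgroup.subset[OF N_subgroup] H_subgroup] by blast
  define U where "U = generate G (insert x M)"
  have U_subgroup: "subgroup U G"
    unfolding U_def using generate_is_subgroup x(1) subgroup.subset[OF M(1)] by blast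
  have "insert x M \<subseteq> U" unfolding U_def by (rule subsetI, rule generate.incl)
  then have "M \<subseteq> U" "x \<in> U" by auto
  then have "openin T U" using openin_subgroup_mono[OF M(1) \<open>openin T M\<close> U_subgroup] by blast
  moreover have "maximal_subgroup_of G T U M"
    unfolding maximal_subgroup_of_def
  proof (intro conjI allI impI)
    show "closed_subgroup G T M"
      unfolding closed_subgroup_def using M(1) closedin_open_subgroup[OF M(1) \<open>openin T M\<close>] by blast
    show "M \<subset> U" using \<open>M \<subseteq> U\<close> \<open>x \<in> U\<close> M(3) by blast
    fix L assume L: "closed_subgroup G T L \<and> M \<subseteq> L \<and> L \<subseteq> U"
    then have L_subgroup: "subgroup L G" unfolding closed_subgroup_def by blast
    show "L = M \<or> L = U"
    proof (cases "x \<in> L")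
      case True
      then have "U \<subseteq> L" unfolding U_def using generate_subgroup_incl[OF _ L_subgroup] L by blast
      then show ?thesis using L by blast
    next
      case False
      then have "L \<in> Fam" unfolding Fam_def using L_subgroup L M(2) by blast
      then show ?thesis using M_maximal L by auto
    qed
  qed
  moreover have "H \<subseteq> M"
    using M(2) subset_set_mult_right[OF N_subgroup subgroup.subset[OF H_subgroup]] by blast
  ultimately show ?thesis using U_subgroup \<open>x \<in> U\<close> M(3) unfolding open_subgroup_def by blast
qed

lemma closedin_open_normal_set_mult:
  assumes "N \<lhd> G" "openin T N" "subgroup J G"
  shows "closedin T (N <#> J)"
  using assms closedin_open_subgroup mult_norm_subgroup openin_subgroup_mono normal_imp_subgroup
    subset_set_mult_left subgroup.subset by metis

lemma exists_open_normal_saturating: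
  assumes M: "closed_subgroup G T M" and L: "maximal_subgroup_of G T M L"
  shows "\<exists>N. N \<lhd> G \<and> openin T N \<and> (N <#> L) \<inter> M \<subseteq> L"
proof -
  have L_closed: "closed_subgroup G T L" and "L \<subset> M"
    and L_maximal: "\<And>J. closed_subgroup G T J \<Longrightarrow> L \<subseteq> J \<Longrightarrow> J \<subseteq> M \<Longrightarrow> J = L \<or> J = M"
    using L unfolding maximal_subgroup_of_def by blast+
  obtain y where y: "y \<in> M" "y \<notin> L" using \<open>L \<subset> M\<close> by blast
  have L_subgroup: "subgroup L G" and M_subgroup: "subgroup M G"
    using L_closed M unfolding closed_subgroup_def by blast+
  obtain N where N: "N \<lhd> G" "openin T N" "y \<notin> N <#> L"
    using exists_open_normal_subgroup_avoiding[OF L_closed subgroup.mem_carrier[OF M_subgroup y(1)] y(2)] by blast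
  have "closed_subgroup G T ((N <#> L) \<inter> M)"
    using subgroups_Inter_pair[OF mult_norm_subgroup[OF N(1) L_subgroup] M_subgroup]
      closedin_Int[OF closedin_open_normal_set_mult[OF N(1,2) L_subgroup]] M
    unfolding closed_subgroup_def by blast
  moreover have "L \<subseteq> (N <#> L) \<inter> M"
    using subset_set_mult_right[OF normal_imp_subgroup[OF N(1)] subgroup.subset[OF L_subgroup]] \<open>L \<subset> M\<close> by blast
  ultimately have "(N <#> L) \<inter> M = L" using L_maximal y N(3) by blast
  then show ?thesis using N(1,2) by blast
qed

lemma maximal_subgroup_normal:
  assumes M: "closed_subgroup G T M" and L: "maximal_subgroup_of G T M L"
  shows "L \<lhd> G\<lparr>carrier := M\<rparr>"
proof -
  obtain N where N: "N \<lhd> G" "openin T N" "(N <#> L) \<inter> M \<subseteq> L"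
    using exists_open_normal_saturating[OF M L] by blast
  obtain k where k: "card (rcosets N) = p ^ k" using index_open_normal[OF N(1,2)] by blast
  have M_subgroup: "subgroup M G" using M unfolding closed_subgroup_def by blast
  have L_subgroup: "subgroup L G" and "L \<subset> M"
    and L_maximal: "\<And>J. closed_subgroup G T J \<Longrightarrow> L \<subseteq> J \<Longrightarrow> J \<subseteq> M \<Longrightarrow> J = L \<or> J = M"
    using L unfolding maximal_subgroup_of_def closed_subgroup_def by blast+
  show ?thesis
  proof (rule maximal_saturated_subgroup_normal[OF prime N(1) k M_subgroup L_subgroup \<open>L \<subset> M\<close> N(3)])
    fix J assume J: "subgroup J G" "L \<subseteq> J" "J \<subseteq> M" "(N <#> J) \<inter> M \<subseteq> J"
    have "(N <#> J) \<inter> M = J"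
      using J subset_set_mult_right[OF normal_imp_subgroup[OF N(1)] subgroup.subset[OF J(1)]] by blast
    then have "closedin T J"
      using closedin_Int[OF closedin_open_normal_set_mult[OF N(1,2) J(1)]] M
      unfolding closed_subgroup_def by metis
    then show "J = L \<or> J = M" using L_maximal J(1-3) unfolding closed_subgroup_def by blast
  qed
qed

lemma maximal_subgroup_Int:
  assumes H: "closed_subgroup G T H" and M: "closed_subgroup G T M" "H \<subseteq> M"
    and L: "maximal_subgroup_of G T M L" and "\<not> H \<subseteq> L"
  shows "maximal_subgroup_of G T H (H \<inter> L)"
  unfolding maximal_subgroup_of_def
proof (intro conjI allI impI)
  have H_subgroup: "subgroup H G" and M_subgroup: "subgroup M G" and L_subgroup: "subgroup L G"
    and L_closed: "closedin T L" and "L \<subset> M"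
    and L_maximal: "\<And>J. closed_subgroup G T J \<Longrightarrow> L \<subseteq> J \<Longrightarrow> J \<subseteq> M \<Longrightarrow> J = L \<or> J = M"
    using H M L unfolding maximal_subgroup_of_def closed_subgroup_def by blast+
  show "closed_subgroup G T (H \<inter> L)"
    using subgroups_Inter_pair[OF H_subgroup L_subgroup] closedin_Int L_closed H
    unfolding closed_subgroup_def by blast
  show "H \<inter> L \<subset> H" using \<open>\<not> H \<subseteq> L\<close> by blast
  fix J assume J: "closed_subgroup G T J \<and> H \<inter> L \<subseteq> J \<and> J \<subseteq> H"
  then have J_subgroup: "subgroup J G" and J_closed: "closedin T J" unfolding closed_subgroup_def by blast+
  show "J = H \<inter> L \<or> J = H"
  proof (cases "J \<subseteq> L")
    case True
    then show ?thesis using J by blast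
  next
    case False
    then obtain j where j: "j \<in> J" "j \<notin> L" by blast
    \<comment> \<open>\<open>L\<close> is normal in \<open>M\<close>, so \<open>L <#> J\<close> is a closed subgroup of \<open>M\<close> strictly above \<open>L\<close>,
      hence all of \<open>M\<close>; as \<open>H \<inter> L \<subseteq> J\<close>, every \<open>h = l \<otimes> j'\<close> in \<open>H\<close> then lies in \<open>J\<close>.\<close>
    have "subgroup (L <#> J) (G\<lparr>carrier := M\<rparr>)"
      using mult_norm_sub_in_sub[OF maximal_subgroup_normal[OF M(1) L] _ M_subgroup]
        subgroup_incl[OF J_subgroup M_subgroup] J M(2) by blast
    then have "closed_subgroup G T (L <#> J)"
      using incl_subgroup[OF M_subgroup] closedin_set_mult[OF L_closed J_closed]
      unfolding closed_subgroup_def by blast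
    moreover have "L \<subseteq> L <#> J" using subset_set_mult_left[OF _ J_subgroup] L_subgroup subgroup.subset by blast
    moreover have "L <#> J \<subseteq> M"
      using \<open>L \<subset> M\<close> J M(2) subgroup.m_closed[OF M_subgroup] unfolding set_mult_def by blast
    moreover have "j \<in> L <#> J"
      using subset_set_mult_right[OF L_subgroup subgroup.subset[OF J_subgroup]] j(1) by blast
    ultimately have LJ: "L <#> J = M" using L_maximal j(2) by blast
    have "H \<subseteq> J"
    proof
      fix h assume h: "h \<in> H"
      then obtain l j' where lj': "l \<in> L" "j' \<in> J" "h = l \<otimes> j'"
        using LJ M(2) unfolding set_mult_def by blast
      have carrier: "h \<in> carrier G" "j' \<in> carrier G" "l \<in> carrier G"
        using h lj' subgroup.mem_carrier H_subgroup J_subgroup L_subgroup by auto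
      then have "l = h \<otimes> inv j'" using lj'(3) by (simp add: m_assoc)
      then have "l \<in> H"
        using subgroup.m_closed[OF H_subgroup h subgroup.m_inv_closed[OF H_subgroup]] lj'(2) J by blast
      then have "l \<in> J" using lj'(1) J by blast
      then show "h \<in> J" using subgroup.m_closed[OF J_subgroup _ lj'(2)] lj'(3) by simp
    qed
    then show ?thesis using J by blast
  qed
qed

lemma frattini_mono:
  assumes H: "closed_subgroup G T H" and M: "closed_subgroup G T M" "H \<subseteq> M"
  shows "frattini G T H \<subseteq> frattini G T M"
proof
  fix u assume u: "u \<in> frattini G T H"
  have "u \<in> L" if L: "maximal_subgroup_of G T M L" for L
  proof (cases "H \<subseteq> L")
    case True
    then show ?thesis using u unfolding frattini_def by blast
  next
    case False
    then show ?thesis using u maximal_subgroup_Int[OF H M L] unfolding frattini_def by blast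
  qed
  then show "u \<in> frattini G T M" using u M(2) unfolding frattini_def by blast
qed

end

section \<open>Frattini covers of closed subgroups\<close>

lemma (in group) closed_subgroup_subgroup_iff:
  assumes U: "subgroup U G" "closedin T U"
  shows "closed_subgroup (G\<lparr>carrier := U\<rparr>) (subtopology T U) L \<longleftrightarrow> closed_subgroup G T L \<and> L \<subseteq> U"
proof
  assume "closed_subgroup (G\<lparr>carrier := U\<rparr>) (subtopology T U) L"
  then have L: "subgroup L (G\<lparr>carrier := U\<rparr>)" "closedin (subtopology T U) L"
    unfolding closed_subgroup_def by blast+
  then show "closed_subgroup G T L \<and> L \<subseteq> U"
    using incl_subgroup[OF U(1) L(1)] subgroup.subset[OF L(1)] closedin_trans_full[OF L(2) U(2)]
    unfolding closed_subgroup_def by simp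
next
  assume "closed_subgroup G T L \<and> L \<subseteq> U"
  then show "closed_subgroup (G\<lparr>carrier := U\<rparr>) (subtopology T U) L"
    using subgroup_incl[OF _ U(1)] closedin_closed_subtopology[OF U(2)]
    unfolding closed_subgroup_def by blast
qed

lemma (in group) frattini_subgroup_eq:
  assumes U: "subgroup U G" "closedin T U" and "A \<subseteq> U"
  shows "frattini (G\<lparr>carrier := U\<rparr>) (subtopology T U) A = frattini G T A"
proof -
  have "maximal_subgroup_of (G\<lparr>carrier := U\<rparr>) (subtopology T U) A = maximal_subgroup_of G T A"
    using closed_subgroup_subgroup_iff[OF U] \<open>A \<subseteq> U\<close> unfolding maximal_subgroup_of_def
    by (intro ext) (meson dual_order.trans psubset_imp_subset)
  then show ?thesis unfolding frattini_def by simp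
qed

locale subgroup_frattini_cover = profinite +
  fixes U and K :: "('c, 'd) monoid_scheme" and TK and \<phi>
  assumes closed_subgroup_U: "closed_subgroup G T U" and group_K: "group K"
    and Hausdorff_K: "Hausdorff_space TK"
    and cover: "frattini_cover (G\<lparr>carrier := U\<rparr>) (subtopology T U) K TK \<phi>"

sublocale subgroup_frattini_cover \<subseteq> cover: group_hom "G\<lparr>carrier := U\<rparr>" K \<phi>
  using cover group_K subgroup_imp_group closed_subgroup_U
  unfolding frattini_cover_def closed_subgroup_def group_hom_def group_hom_axioms_def by blast

context subgroup_frattini_cover
begin

lemma U_subgroup: "subgroup U G" and U_closed: "closedin T U"
  using closed_subgroup_U unfolding closed_subgroup_def by blast+

lemma image_U: "\<phi> ` U = carrier K"
  using cover unfolding frattini_cover_def by simp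

lemma kernel_subset_frattini: "kernel (G\<lparr>carrier := U\<rparr>) K \<phi> \<subseteq> frattini G T U"
  using cover frattini_subgroup_eq[OF U_subgroup U_closed]
  unfolding frattini_cover_def kernel_def by simp

lemma image_nat_pow: "x \<in> U \<Longrightarrow> \<phi> (x [^] n) = \<phi> x [^]\<^bsub>K\<^esub> (n::nat)"
  using cover.hom_nat_pow[of x n] nat_pow_consistent[of x n U] by simp

lemma image_closed_subgroup:
  assumes J: "closed_subgroup G T J" "J \<subseteq> U"
  shows "closed_subgroup K TK (\<phi> ` J)"
proof -
  have "subgroup J (G\<lparr>carrier := U\<rparr>)"
    using subgroup_incl[OF _ U_subgroup J(2)] J(1) unfolding closed_subgroup_def by blast
  moreover have "compactin (subtopology T U) J"
    using J closedin_compact_space[OF compact] compactin_subtopology unfolding closed_subgroup_def by blast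
  then have "compactin TK (\<phi> ` J)"
    using image_compactin cover unfolding frattini_cover_def by blast
  ultimately show ?thesis
    using cover.subgroup_img_is_subgroup compactin_imp_closedin[OF Hausdorff_K]
    unfolding closed_subgroup_def by blast
qed

lemma vimage_closed_subgroup:
  assumes B: "closed_subgroup G T B" "B \<subseteq> U" and L: "closed_subgroup K TK L"
  shows "closed_subgroup G T {u \<in> B. \<phi> u \<in> L}"
proof -
  define V where "V = {u \<in> U. \<phi> u \<in> L}"
  have "subgroup V G"
    using cover.subgroup_vimage L incl_subgroup[OF U_subgroup] unfolding V_def closed_subgroup_def by auto
  moreover have "closedin (subtopology T U) {u \<in> topspace (subtopology T U). \<phi> u \<in> L}"
    using closedin_continuous_map_preimage cover L unfolding frattini_cover_def closed_subgroup_def by blast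
  then have "closedin T V"
    using closedin_trans_full[OF _ U_closed] subgroup.subset[OF U_subgroup]
    unfolding V_def by (simp add: Int_absorb1)
  moreover have "{u \<in> B. \<phi> u \<in> L} = B \<inter> V" using B(2) unfolding V_def by blast
  ultimately show ?thesis
    using B(1) subgroups_Inter_pair[of B V] closedin_Int[of T B V] unfolding closed_subgroup_def by auto
qed

lemma mem_of_image_mem:
  assumes J: "subgroup J G" "kernel (G\<lparr>carrier := U\<rparr>) K \<phi> \<subseteq> J" "J \<subseteq> U"
    and u: "u \<in> U" "\<phi> u \<in> \<phi> ` J"
  shows "u \<in> J"
proof -
  obtain j where j: "j \<in> J" "\<phi> u = \<phi> j" using u(2) by blast
  have j_U: "j \<in> U" using j(1) J(3) by blast
  have "\<phi> (inv j \<otimes> u) = \<one>\<^bsub>K\<^esub>"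
    using cover.hom_mult[of "inv j" u] cover.hom_inv[of j] j u(1) j_U m_inv_consistent[OF U_subgroup j_U]
      subgroup.m_inv_closed[OF U_subgroup j_U] cover.H.l_inv[of "\<phi> j"] cover.hom_closed[of j]
    by simp
  then have "inv j \<otimes> u \<in> J"
    using J(2) subgroup.m_closed[OF U_subgroup subgroup.m_inv_closed[OF U_subgroup j_U] u(1)]
    unfolding kernel_def by auto
  then have "j \<otimes> (inv j \<otimes> u) \<in> J" using subgroup.m_closed[OF J(1) j(1)] by blast
  then show ?thesis
    using j_U u(1) subgroup.mem_carrier[OF U_subgroup] by (simp add: m_assoc[symmetric])
qed

lemma maximal_image_iff:
  assumes A: "closed_subgroup G T A" and B: "closed_subgroup G T B"
    and kernel: "kernel (G\<lparr>carrier := U\<rparr>) K \<phi> \<subseteq> A" and "A \<subseteq> B" "B \<subseteq> U"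
  shows "maximal_subgroup_of K TK (\<phi> ` B) (\<phi> ` A) \<longleftrightarrow> maximal_subgroup_of G T B A"
proof -
  have mem_from_image: "u \<in> J" if "closed_subgroup G T J" "A \<subseteq> J" "J \<subseteq> U" "u \<in> U" "\<phi> u \<in> \<phi> ` J" for J u
    using mem_of_image_mem[of J u] that kernel unfolding closed_subgroup_def by blast
  have psubset_iff: "\<phi> ` A \<subset> \<phi> ` B \<longleftrightarrow> A \<subset> B"
    using mem_from_image[OF A] \<open>A \<subseteq> B\<close> \<open>B \<subseteq> U\<close> by blast
  show ?thesis
  proof
    assume max: "maximal_subgroup_of K TK (\<phi> ` B) (\<phi> ` A)"
    show "maximal_subgroup_of G T B A"
      unfolding maximal_subgroup_of_def
    proof (intro conjI allI impI)
      show "closed_subgroup G T A" "A \<subset> B" using A max psubset_iff unfolding maximal_subgroup_of_def by blast+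
      fix J assume J: "closed_subgroup G T J \<and> A \<subseteq> J \<and> J \<subseteq> B"
      then have "closed_subgroup K TK (\<phi> ` J)" "\<phi> ` A \<subseteq> \<phi> ` J" "\<phi> ` J \<subseteq> \<phi> ` B"
        using image_closed_subgroup[of J] \<open>B \<subseteq> U\<close> by auto
      then have "\<phi> ` J = \<phi> ` A \<or> \<phi> ` J = \<phi> ` B"
        using max unfolding maximal_subgroup_of_def by blast
      then show "J = A \<or> J = B"
      proof
        assume "\<phi> ` J = \<phi> ` A"
        then have "J \<subseteq> A" using J mem_from_image[OF A] \<open>B \<subseteq> U\<close> by blast
        then show ?thesis using J by blast
      next
        assume "\<phi> ` J = \<phi> ` B"
        then have "B \<subseteq> J" using J mem_from_image[of J] \<open>B \<subseteq> U\<close> by blast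
        then show ?thesis using J by blast
      qed
    qed
  next
    assume max: "maximal_subgroup_of G T B A"
    show "maximal_subgroup_of K TK (\<phi> ` B) (\<phi> ` A)"
      unfolding maximal_subgroup_of_def
    proof (intro conjI allI impI)
      show "closed_subgroup K TK (\<phi> ` A)" using image_closed_subgroup A \<open>A \<subseteq> B\<close> \<open>B \<subseteq> U\<close> by blast
      show "\<phi> ` A \<subset> \<phi> ` B" using max psubset_iff unfolding maximal_subgroup_of_def by blast
      fix L assume L: "closed_subgroup K TK L \<and> \<phi> ` A \<subseteq> L \<and> L \<subseteq> \<phi> ` B"
      define J where "J = {u \<in> B. \<phi> u \<in> L}"
      have "closed_subgroup G T J" unfolding J_def using vimage_closed_subgroup B \<open>B \<subseteq> U\<close> L by blast
      moreover have "A \<subseteq> J" "J \<subseteq> B" using L \<open>A \<subseteq> B\<close> unfolding J_def by auto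
      ultimately have "J = A \<or> J = B" using max unfolding maximal_subgroup_of_def by blast
      moreover have "\<phi> ` J = L" using L unfolding J_def by blast
      ultimately show "L = \<phi> ` A \<or> L = \<phi> ` B" by blast
    qed
  qed
qed

lemma maximal_image:
  assumes M: "maximal_subgroup_of G T U M"
  shows "kernel (G\<lparr>carrier := U\<rparr>) K \<phi> \<subseteq> M" and "maximal_subgroup_of K TK (carrier K) (\<phi> ` M)"
proof -
  show kernel: "kernel (G\<lparr>carrier := U\<rparr>) K \<phi> \<subseteq> M"
    using kernel_subset_frattini M unfolding frattini_def by blast
  show "maximal_subgroup_of K TK (carrier K) (\<phi> ` M)"
    using maximal_image_iff[OF _ closed_subgroup_U kernel] M image_U
    unfolding maximal_subgroup_of_def by auto
qed

lemma image_frattini: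
  assumes M: "closed_subgroup G T M" "kernel (G\<lparr>carrier := U\<rparr>) K \<phi> \<subseteq> M" "M \<subseteq> U"
  shows "\<phi> ` frattini G T M \<subseteq> frattini K TK (\<phi> ` M)"
proof
  fix y assume "y \<in> \<phi> ` frattini G T M"
  then obtain u where u: "u \<in> frattini G T M" "y = \<phi> u" by blast
  have "\<phi> u \<in> L" if L: "maximal_subgroup_of K TK (\<phi> ` M) L" for L
  proof -
    define A where "A = {u \<in> M. \<phi> u \<in> L}"
    have L_closed: "closed_subgroup K TK L" and "L \<subseteq> \<phi> ` M"
      using L unfolding maximal_subgroup_of_def by auto
    have A_closed: "closed_subgroup G T A" unfolding A_def using vimage_closed_subgroup M L_closed by blast
    have "kernel (G\<lparr>carrier := U\<rparr>) K \<phi> \<subseteq> A"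
      using M(2) subgroup.one_closed[of L K] L_closed unfolding A_def kernel_def closed_subgroup_def by auto
    moreover have "\<phi> ` A = L" using \<open>L \<subseteq> \<phi> ` M\<close> unfolding A_def by blast
    ultimately have "maximal_subgroup_of G T M A"
      using maximal_image_iff[OF A_closed M(1)] L M(3) unfolding A_def by auto
    then show ?thesis using u(1) unfolding frattini_def A_def by blast
  qed
  then show "y \<in> frattini K TK (\<phi> ` M)" using u unfolding frattini_def by blast
qed

lemma mem_maximal_if_hierarchical_image:
  assumes M: "maximal_subgroup_of G T U M"
    and hierarchical: "hierarchical K n (\<phi> ` M) (frattini K TK (\<phi> ` M))"
    and x: "x \<in> U" "x [^] n \<in> frattini G T M"
  shows "x \<in> M"
proof -
  have M_closed: "closed_subgroup G T M" and "M \<subseteq> U"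
    using M unfolding maximal_subgroup_of_def by auto
  note kernel = maximal_image(1)[OF M]
  have "\<phi> (x [^] n) \<in> frattini K TK (\<phi> ` M)"
    using image_frattini[OF M_closed kernel \<open>M \<subseteq> U\<close>] x(2) by blast
  moreover have "\<phi> x \<in> carrier K" using image_U x(1) by blast
  ultimately have "\<phi> x \<in> \<phi> ` M"
    using hierarchical image_nat_pow[OF x(1)] unfolding hierarchical_def by simp
  then show ?thesis
    using mem_of_image_mem[OF _ kernel \<open>M \<subseteq> U\<close> x(1)] M_closed unfolding closed_subgroup_def by blast
qed

end

lemma (in pro_p) subgroup_frattini_coverI:
  assumes "open_subgroup G T U" "pro_p_group K TK p"
    and "frattini_cover (G\<lparr>carrier := U\<rparr>) (subtopology T U) K TK \<phi>"
  shows "subgroup_frattini_cover G T U K TK \<phi>"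
proof (intro subgroup_frattini_cover.intro subgroup_frattini_cover_axioms.intro)
  show "profinite G T" by (rule profinite_axioms)
  show "closed_subgroup G T U"
    using assms(1) closedin_open_subgroup unfolding open_subgroup_def closed_subgroup_def by blast
  show "group K" "Hausdorff_space TK"
    using assms(2) unfolding pro_p_group_def profinite_group_def topological_group_def by auto
qed (rule assms(3))

theorem mainTheorem20:
  fixes G :: "('a, 'm) monoid_scheme" and T :: "'a topology" and p :: nat
  assumes "Factorial_Ring.prime p"
    and "pro_p_group G T p"
    and "\<forall>U. open_subgroup G T U \<longrightarrow>
           (\<exists>(K :: ('b, 'n) monoid_scheme) (TK :: 'b topology) (\<phi> :: 'a \<Rightarrow> 'b).
              pro_p_group K TK p \<and>
              frattini_cover (G\<lparr>carrier := U\<rparr>) (subtopology T U) K TK \<phi> \<and>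
              (\<forall>M. maximal_subgroup_of K TK (carrier K) M \<longrightarrow>
                   hierarchical K p M (frattini K TK M)))"
  shows "strongly_frattini_resistant G T p"
proof -
  interpret pro_p G T p by (rule pro_pI[OF assms(1,2)])
  show ?thesis
    unfolding strongly_frattini_resistant_def hierarchical_def
  proof (intro allI impI conjI ballI)
    fix H assume H: "closed_subgroup G T H"
    show "frattini G T H \<subseteq> H" unfolding frattini_def by blast
    show "H \<subseteq> carrier G" using H subgroup.subset unfolding closed_subgroup_def by blast
    fix x assume x: "x \<in> carrier G" "x [^]\<^bsub>G\<^esub> p \<in> frattini G T H"
    show "x \<in> H"
    proof (rule ccontr)
      assume "x \<notin> H"
      then obtain U M where U: "open_subgroup G T U"
        and M: "maximal_subgroup_of G T U M" "H \<subseteq> M" "x \<in> U" "x \<notin> M"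
        using exists_maximal_open_subgroup_avoiding[OF H x(1)] by blast
      then obtain K :: "('b, 'n) monoid_scheme" and TK \<phi>
        where K: "pro_p_group K TK p" and cover: "frattini_cover (G\<lparr>carrier := U\<rparr>) (subtopology T U) K TK \<phi>"
          and hierarchical: "\<And>L. maximal_subgroup_of K TK (carrier K) L \<Longrightarrow> hierarchical K p L (frattini K TK L)"
        using assms(3) by blast
      interpret subgroup_frattini_cover G T U K TK \<phi> by (rule subgroup_frattini_coverI[OF U K cover])
      have "x [^]\<^bsub>G\<^esub> p \<in> frattini G T M"
        using frattini_mono[OF H _ M(2)] M(1) x(2) unfolding maximal_subgroup_of_def by blast
      then show False
        using mem_maximal_if_hierarchical_image[OF M(1) hierarchical[OF maximal_image(2)[OF M(1)]] M(3)] M(4)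
        by blast
    qed
  qed
qed

end
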